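(* Let $w$ be a word of length $k$ with $s \ne k-1$. Then either $b_{t(k-s)} = 0$ for every integer $1 \le t \le \lfloor k/(k-s) \rfloor$, or $b_{t(k-s)-1} = 0$ for every integer $1 \le t \le \lfloor (k+1)/(k-s) \rfloor$.
   Context: A word of length $k$ is written $w = w_k\dots w_1$. Autocorrelation digits: for $1 \le i \le k$, $b_i = 1$ if $w_j = w_{k-i+j}$ for all $j=1,\dots,i$, else $b_i = 0$ (so $b_k = 1$); convention $b_0=1$. $s = \max\{j \in\{1,\dots,k-1\}: b_j=1\}$, or $s=0$ if no such $j$. *)

theory Defs
  imports Main
begin

text \<open>A word w = w_k ... w_1 of length k is an 'a list read left to right,
  so the letter w_j (1 <= j <= k) is the list element at position k - j.\<close>
definition letter :: "'a list \<Rightarrow> nat \<Rightarrow> 'a" where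
  "letter w j = w ! (length w - j)"

definition autocorr :: "'a list \<Rightarrow> nat \<Rightarrow> nat" where
  "autocorr w i =
     (if i = 0 \<or> (i \<le> length w \<and>
          (\<forall>j\<in>{1..i}. letter w j = letter w (length w - i + j)))
      then 1 else 0)"

definition maxcorr :: "'a list \<Rightarrow> nat" where
  "maxcorr w = (let S = {j\<in>{1..<length w}. autocorr w j = 1} in
                if S = {} then 0 else Max S)"

end

theory Submission
  imports Defs
begin

text \<open>The autocorrelation digit \<open>b_i\<close> (for \<open>1 \<le> i \<le> k\<close>) is \<open>1\<close> exactly when
  \<open>k - i\<close> is a period of \<open>w\<close>, so \<open>p = k - s\<close> is the least positive period of \<open>w\<close>, and
  \<open>s \<noteq> k - 1\<close> says \<open>p \<ge> 2\<close>. By the weak Fine--Wilf theorem, \<open>p\<close> divides every other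
  period \<open>q\<close> with \<open>p + q \<le> k\<close>. If \<open>b_{tp} = 1\<close>, applying this to the period \<open>k - tp\<close> gives
  \<open>p | k\<close>. If moreover \<open>b_{tp-1} = 1\<close>, then \<open>k + 1 - tp\<close> is a period: for \<open>t \<ge> 2\<close> the same
  argument gives \<open>p | k + 1\<close>, impossible; for \<open>t = 1\<close> the periods \<open>p\<close> and \<open>k + 1 - p\<close>
  together with \<open>p | k\<close> force the word to be constant, contradicting \<open>p \<ge> 2\<close>.\<close>

definition has_period :: "'a list \<Rightarrow> nat \<Rightarrow> bool" where
  "has_period w q \<longleftrightarrow> (\<forall>i. i + q < length w \<longrightarrow> w ! i = w ! (i + q))"

definition minimal_period :: "'a list \<Rightarrow> nat \<Rightarrow> bool" where
  "minimal_period w p \<longleftrightarrow> 0 < p \<and> has_period w p \<and> (\<forall>q. 0 < q \<longrightarrow> has_period w q \<longrightarrow> p \<le> q)"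

lemma has_period_ge_length: "length w \<le> q \<Longrightarrow> has_period w q"
  unfolding has_period_def by simp

lemma has_period_mult:
  assumes "has_period w p"
  shows "i + m * p < length w \<Longrightarrow> w ! i = w ! (i + m * p)"
proof (induction m)
  case (Suc m)
  have "w ! (i + m * p) = w ! (i + m * p + p)"
    using assms Suc.prems unfolding has_period_def by (auto simp: algebra_simps)
  with Suc show ?case by (auto simp: algebra_simps)
qed simp

lemma has_period_nth_mod:
  assumes "has_period w p" "i < length w"
  shows "w ! i = w ! (i mod p)"
  using has_period_mult[OF assms(1), of "i mod p" "i div p"] assms(2) by simp

lemma has_period_diff:
  assumes "has_period w p" "has_period w q" "p \<le> q" "p + q \<le> length w"
  shows "has_period w (q - p)"
  unfolding has_period_def
proof (intro allI impI)
  fix i assume i: "i + (q - p) < length w"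
  show "w ! i = w ! (i + (q - p))"
  proof (cases "i + q < length w")
    case True
    then have "w ! i = w ! (i + q)" using assms(2) unfolding has_period_def by blast
    moreover have "w ! (i + (q - p)) = w ! (i + (q - p) + p)"
      using assms(1,3) True unfolding has_period_def by auto
    ultimately show ?thesis using assms(3) by simp
  next
    case False
    then have ip: "p \<le> i" using assms(4) by linarith
    have "w ! (i - p) = w ! (i - p + p)" using assms(1) ip i unfolding has_period_def by auto
    moreover have "w ! (i - p) = w ! (i - p + q)"
      using assms(2,3) ip i unfolding has_period_def by auto
    ultimately show ?thesis using ip assms(3) by (simp add: algebra_simps)
  qed
qed

text \<open>Weak Fine--Wilf theorem, by the subtractive Euclidean algorithm.\<close>
lemma has_period_gcd:
  "has_period w p \<Longrightarrow> has_period w q \<Longrightarrow> p + q \<le> length w \<Longrightarrow> has_period w (gcd p q)"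
proof (induction "p + q" arbitrary: p q rule: less_induct)
  case less
  show ?case
  proof (cases "p = 0 \<or> q = 0")
    case True
    then show ?thesis using less by auto
  next
    case nonzero: False
    show ?thesis
    proof (cases "p \<le> q")
      case True
      have "has_period w (q - p)" using has_period_diff[OF less(2,3) True less(4)] .
      then have "has_period w (gcd p (q - p))" using less nonzero True by auto
      moreover have "gcd p (q - p) = gcd p q" using gcd_diff1_nat[OF True] by (simp add: ac_simps)
      ultimately show ?thesis by simp
    next
      case False
      have "has_period w (p - q)" using has_period_diff[OF less(3,2)] False less(4) by simp
      then have "has_period w (gcd (p - q) q)" using less nonzero False by auto
      then show ?thesis using False by (simp add: gcd_diff1_nat)
    qed
  qed
qed

lemma minimal_period_dvd_period:
  assumes "minimal_period w p" "has_period w q" "p + q \<le> length w"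
  shows "p dvd q"
proof -
  have p: "0 < p" "has_period w p" using assms(1) unfolding minimal_period_def by auto
  have "has_period w (gcd p q)" using has_period_gcd[OF p(2) assms(2,3)] .
  moreover have "0 < gcd p q" using p(1) by simp
  ultimately have "p \<le> gcd p q" using assms(1) unfolding minimal_period_def by blast
  then have "gcd p q = p" using gcd_le1_nat[of p q] p(1) by linarith
  then show ?thesis by (metis gcd_dvd2)
qed

text \<open>With \<open>|w| = mp\<close>, a shift by \<open>|w| + 1 - p\<close> acts on residues mod \<open>p\<close> as \<open>j \<mapsto> j + 1\<close>.\<close>
lemma has_period_1_if_dvd_length:
  assumes per_p: "has_period w p" and dvd: "p dvd length w"
    and per_shift: "has_period w (length w + 1 - p)" and p: "1 \<le> p" "p \<le> length w"
  shows "has_period w 1"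
proof -
  let ?n = "length w"
  obtain c where c: "?n - p = p * c" using dvd p by (metis dvd_diff_nat dvd_refl dvdE)
  have step: "w ! j = w ! (j + 1)" if j: "j + 1 < p" for j
  proof -
    have shift_lt: "j + 1 + (?n - p) < ?n" using j p by linarith
    have "j + (?n + 1 - p) = j + 1 + (?n - p)" using p(2) by simp
    then have "w ! j = w ! (j + 1 + (?n - p))"
      using per_shift shift_lt unfolding has_period_def by metis
    also have "\<dots> = w ! ((j + 1 + p * c) mod p)" using has_period_nth_mod[OF per_p shift_lt] c by simp
    also have "\<dots> = w ! (j + 1)" using j by simp
    finally show ?thesis .
  qed
  have residue: "j < p \<Longrightarrow> w ! j = w ! 0" for j
    by (induction j) (use step in auto)
  show ?thesis
    unfolding has_period_def
    using has_period_nth_mod[OF per_p] residue p(1)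
    by (metis add_lessD1 less_le_trans mod_less_divisor zero_less_one)
qed

lemma minimal_period_dvd_length:
  assumes min: "minimal_period w p" and per: "has_period w (length w - t * p)"
    and t: "1 \<le> t" "t * p \<le> length w"
  shows "p dvd length w"
proof -
  have "p \<le> t * p" using t(1) by simp
  then have "p + (length w - t * p) \<le> length w" using t(2) by linarith
  then have "p dvd length w - t * p" using minimal_period_dvd_period[OF min per] by blast
  then have "p dvd (length w - t * p) + t * p" by simp
  then show ?thesis using t(2) by simp
qed

lemma not_has_period_length_Suc_minus_mult:
  assumes min: "minimal_period w p" and p: "2 \<le> p" and dvd: "p dvd length w"
    and t: "1 \<le> t" "t * p \<le> length w + 1"
  shows "\<not> has_period w (length w + 1 - t * p)"
proof
  assume per: "has_period w (length w + 1 - t * p)"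
  have per_p: "has_period w p" and not_per_1: "\<not> has_period w 1"
    using min p unfolding minimal_period_def by auto
  show False
  proof (cases "t = 1")
    case True
    have "length w \<noteq> 0" using t(2) True p by auto
    then have "p \<le> length w" using dvd by (simp add: dvd_imp_le)
    then have "has_period w 1" using has_period_1_if_dvd_length[OF per_p dvd] per True p by simp
    with not_per_1 show False ..
  next
    case False
    then have "2 * p \<le> t * p" using t(1) by simp
    then have "p + (length w + 1 - t * p) \<le> length w" using t(2) p by linarith
    then have "p dvd length w + 1 - t * p" using minimal_period_dvd_period[OF min per] by blast
    then have "p dvd (length w + 1 - t * p) + t * p" by simp
    then have "p dvd length w + 1" using t(2) by simp
    then have "p dvd 1" using dvd dvd_add_right_iff by blast
    then show False using p by simp
  qed
qed

lemma autocorr_eq_1_iff_has_period: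
  assumes "1 \<le> i" "i \<le> length w"
  shows "autocorr w i = 1 \<longleftrightarrow> has_period w (length w - i)"
proof -
  let ?k = "length w"
  have "(\<forall>j\<in>{1..i}. letter w j = letter w (?k - i + j)) \<longleftrightarrow> has_period w (?k - i)"
  proof
    assume H: "\<forall>j\<in>{1..i}. letter w j = letter w (?k - i + j)"
    show "has_period w (?k - i)" unfolding has_period_def
    proof (intro allI impI)
      fix m assume m: "m + (?k - i) < ?k"
      have "?k - (i - m) = m + (?k - i)" "?k - (?k - i + (i - m)) = m" "i - m \<in> {1..i}"
        using m assms by auto
      with H show "w ! m = w ! (m + (?k - i))" unfolding letter_def by metis
    qed
  next
    assume P: "has_period w (?k - i)"
    show "\<forall>j\<in>{1..i}. letter w j = letter w (?k - i + j)"
    proof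
      fix j assume j: "j \<in> {1..i}"
      have "?k - j = (i - j) + (?k - i)" "?k - (?k - i + j) = i - j" "i - j + (?k - i) < ?k"
        using j assms by auto
      with P show "letter w j = letter w (?k - i + j)"
        unfolding letter_def has_period_def by metis
    qed
  qed
  then show ?thesis unfolding autocorr_def using assms by auto
qed

lemma autocorr_eq_0_iff: "autocorr w i = 0 \<longleftrightarrow> autocorr w i \<noteq> 1"
  unfolding autocorr_def by simp

lemma maxcorr_cases:
  obtains "maxcorr w = 0" "\<forall>j\<in>{1..<length w}. autocorr w j \<noteq> 1"
  | "maxcorr w \<in> {1..<length w}" "autocorr w (maxcorr w) = 1"
    "\<forall>j\<in>{1..<length w}. autocorr w j = 1 \<longrightarrow> j \<le> maxcorr w"
proof -
  define S where "S = {j\<in>{1..<length w}. autocorr w j = 1}"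
  have maxcorr: "maxcorr w = (if S = {} then 0 else Max S)"
    unfolding maxcorr_def S_def Let_def ..
  show thesis
  proof (cases "S = {}")
    case True
    then show thesis using that(1) maxcorr unfolding S_def by auto
  next
    case False
    have "finite S" unfolding S_def by simp
    then have "Max S \<in> S" "\<forall>j\<in>S. j \<le> Max S" using False by auto
    then have "Max S \<in> {1..<length w}" "autocorr w (Max S) = 1"
      "\<forall>j\<in>{1..<length w}. autocorr w j = 1 \<longrightarrow> j \<le> Max S"
      unfolding S_def by auto
    then show thesis using that(2) maxcorr False by simp
  qed
qed

lemma minimal_period_length_minus_maxcorr:
  assumes "w \<noteq> []"
  shows "minimal_period w (length w - maxcorr w)"
proof -
  let ?k = "length w"
  have below: "?k - maxcorr w \<le> q" if q: "0 < q" "has_period w q" for q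
  proof (cases "q < ?k")
    case True
    then have "autocorr w (?k - q) = 1" using autocorr_eq_1_iff_has_period[of "?k - q" w] q by auto
    then show ?thesis using True q(1) by (cases w rule: maxcorr_cases) force+
  qed simp
  have "has_period w (?k - maxcorr w)"
    using autocorr_eq_1_iff_has_period[of "maxcorr w" w]
    by (cases w rule: maxcorr_cases) (auto intro: has_period_ge_length)
  moreover have "maxcorr w < ?k" using assms by (cases w rule: maxcorr_cases) auto
  ultimately show ?thesis unfolding minimal_period_def using below by auto
qed

theorem proposition4p2:
  fixes w :: "'a list" and k s :: nat
  assumes "length w = k" and "1 \<le> k"
    and "s = maxcorr w" and "s \<noteq> k - 1"
  shows "(\<forall>t::nat. 1 \<le> t \<and> t \<le> k div (k - s) \<longrightarrow> autocorr w (t * (k - s)) = 0)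
       \<or> (\<forall>t::nat. 1 \<le> t \<and> t \<le> (k + 1) div (k - s) \<longrightarrow> autocorr w (t * (k - s) - 1) = 0)"
proof (rule ccontr)
  define p where "p = k - s"
  have min: "minimal_period w p"
    using minimal_period_length_minus_maxcorr[of w] assms unfolding p_def by fastforce
  then have "p \<noteq> 1" "0 < p" using assms unfolding p_def minimal_period_def by auto
  then have p2: "2 \<le> p" by linarith
  assume "\<not> ?thesis"
  then obtain t1 t2 where t1: "1 \<le> t1" "t1 \<le> k div p" "autocorr w (t1 * p) = 1"
    and t2: "1 \<le> t2" "t2 \<le> (k + 1) div p" "autocorr w (t2 * p - 1) = 1"
    unfolding p_def autocorr_eq_0_iff by blast
  have t1p: "t1 * p \<le> k" and t2p: "p \<le> t2 * p" "t2 * p \<le> k + 1"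
    using t1 t2 less_eq_div_iff_mult_less_eq p2 by auto
  have "has_period w (k - t1 * p)"
    using t1 t1p p2 assms(1) autocorr_eq_1_iff_has_period[of "t1 * p" w] by simp
  then have dvd_k: "p dvd k" using minimal_period_dvd_length[OF min] t1 t1p assms(1) by simp
  have "1 \<le> t2 * p - 1" "t2 * p - 1 \<le> k" "k - (t2 * p - 1) = k + 1 - t2 * p"
    using t2p p2 by linarith+
  then have "has_period w (k + 1 - t2 * p)"
    using t2(3) assms(1) autocorr_eq_1_iff_has_period[of "t2 * p - 1" w] by simp
  with dvd_k show False
    using not_has_period_length_Suc_minus_mult[OF min p2] t2 t2p assms(1) by simp
qed

end
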